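(* Let $Z\in\mathbb{R}^{p_z}$ and $U\in\mathbb{R}$ be random, let $(U^\dagger,Z^\dagger)$ be an independent copy of $(U,Z)$, and let $\nu$ be a measure on $\mathbb{R}^{p_z}$ that is symmetric about the origin. Define $K(z):=\int_{\mathbb{R}^{p_z}}(1-\cos(z's))\,\nu(ds)$. Suppose $\mathbb{E}U^2<\infty$ and either (i) $\nu$ is a finite (integrable) measure; or (ii) for some $\alpha\in(0,2]$, $\int_{\mathbb{R}^{p_z}}(1\wedge\|s\|^{\alpha})\,\nu(ds)<\infty$ and $\mathbb{E}|U|^2+\mathbb{E}\|Z\|^{2\alpha}<\infty$. Then $$T(U|Z;\nu)=-\mathbb{E}\big[(U-\mathbb{E}U)(U^\dagger-\mathbb{E}U)K(Z-Z^\dagger)\big],$$ where $T(U|Z;\nu):=\int_{\mathbb{R}^{p_z}}\big|\mathbb{E}[(U-\mathbb{E}U)\exp(\mathrm{i}Z's)]\big|^2\nu(ds)$.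
   Context: $\mathrm{i}$ is the imaginary unit; $a\wedge b=\min(a,b)$. *)

theory Defs
  imports "HOL-Probability.Probability"
begin

definition Kfun :: "'a::euclidean_space measure \<Rightarrow> 'a \<Rightarrow> real" where
  "Kfun \<nu> z = (\<integral>s. (1 - cos (z \<bullet> s)) \<partial>\<nu>)"

definition Tstat :: "'w measure \<Rightarrow> ('w \<Rightarrow> real) \<Rightarrow> ('w \<Rightarrow> 'a::euclidean_space)
    \<Rightarrow> 'a measure \<Rightarrow> real" where
  "Tstat M U Z \<nu> =
     (\<integral>s. (cmod (\<integral>\<omega>. complex_of_real (U \<omega> - (\<integral>\<omega>'. U \<omega>' \<partial>M))
                          * exp (\<i> * complex_of_real (Z \<omega> \<bullet> s)) \<partial>M))\<^sup>2 \<partial>\<nu>)"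

definition symmetric_measure :: "'a::euclidean_space measure \<Rightarrow> bool" where
  "symmetric_measure \<nu> \<longleftrightarrow>
     sets \<nu> = sets borel \<and> (\<forall>A\<in>sets borel. emeasure \<nu> (uminus ` A) = emeasure \<nu> A)"

end

theory Submission
  imports Defs
begin

text \<open>
  Expanding \<open>|E[V e^{i Z's}]|\<^sup>2 = E[V V' e^{i (Z - Z')'s}]\<close> for the centred \<open>V = U - EU\<close> and
  its independent copy \<open>V'\<close>, and using \<open>E[V V'] = 0\<close>, the integrand of \<open>T\<close> at \<open>s\<close> becomes
  \<open>-E[V V' (1 - cos ((Z - Z')'s))]\<close>. Integrating over \<open>\<nu>\<close> and exchanging the two integrals
  gives the claim. Fubini applies because \<open>|1 - cos t| \<le> 2 min 1 |t|\<^sup>\<alpha>\<close> dominates the integrand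
  by a product of an \<open>M\<close>-integrable and a \<open>\<nu>\<close>-integrable function; all integrands vanish at
  \<open>s = 0\<close>, so \<open>\<nu>\<close> may be replaced by its restriction to \<open>s \<noteq> 0\<close>, which is \<open>\<sigma>\<close>-finite.
\<close>

lemma one_minus_cos_le_half_square: "1 - cos (t::real) \<le> t\<^sup>2 / 2"
proof -
  have "cos t = 1 - 2 * (sin (t/2))\<^sup>2"
    using cos_double[of "t/2"] by (simp add: cos_squared_eq)
  moreover have "(sin (t/2))\<^sup>2 \<le> (t/2)\<^sup>2"
    using abs_sin_x_le_abs_x[of "t/2"] by (metis abs_ge_zero power2_abs power_mono)
  ultimately show ?thesis by (simp add: power_divide)
qed

lemma abs_one_minus_cos_le_min_powr:
  fixes t \<alpha> :: real
  assumes "0 < \<alpha>" "\<alpha> \<le> 2"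
  shows "\<bar>1 - cos t\<bar> \<le> 2 * min 1 (\<bar>t\<bar> powr \<alpha>)"
proof (cases "\<bar>t\<bar> \<ge> 1")
  case True
  then have "1 \<le> \<bar>t\<bar> powr \<alpha>" using assms by (simp add: ge_one_powr_ge_zero)
  then show ?thesis using cos_le_one[of t] cos_ge_minus_one[of t] by simp
next
  case False
  have "t\<^sup>2 = \<bar>t\<bar> powr 2" by (simp add: powr_numeral)
  also have "\<dots> \<le> \<bar>t\<bar> powr \<alpha>" using False assms by (intro powr_mono') auto
  finally have "1 - cos t \<le> \<bar>t\<bar> powr \<alpha>"
    using one_minus_cos_le_half_square[of t] powr_ge_zero[of "\<bar>t\<bar>" \<alpha>] by linarith
  then have "1 - cos t \<le> 2 * \<bar>t\<bar> powr \<alpha>" using powr_ge_zero[of "\<bar>t\<bar>" \<alpha>] by linarith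
  moreover have "\<bar>t\<bar> powr \<alpha> \<le> 1" using False assms by (intro powr_le1) auto
  ultimately show ?thesis using cos_le_one[of t] by (simp add: min_def)
qed

lemma min_one_mult_le:
  fixes a b :: real
  assumes "0 \<le> a" "0 \<le> b"
  shows "min 1 (a * b) \<le> max 1 a * min 1 b"
proof (cases "b \<ge> 1")
  case False
  have "a * b \<le> max 1 a * b" using assms by (intro mult_right_mono) auto
  then show ?thesis using False by (simp add: min_def)
qed (simp add: min_le_iff_disj)

lemma abs_one_minus_cos_inner_le:
  fixes x s :: "'a::euclidean_space" and \<alpha> :: real
  assumes "0 < \<alpha>" "\<alpha> \<le> 2"
  shows "\<bar>1 - cos (x \<bullet> s)\<bar> \<le> 2 * max 1 (norm x powr \<alpha>) * min 1 (norm s powr \<alpha>)"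
proof -
  have "\<bar>x \<bullet> s\<bar> powr \<alpha> \<le> (norm x * norm s) powr \<alpha>"
    using assms Cauchy_Schwarz_ineq2[of x s] by (intro powr_mono2) auto
  also have "\<dots> = norm x powr \<alpha> * norm s powr \<alpha>" by (simp add: powr_mult)
  finally have "min 1 (\<bar>x \<bullet> s\<bar> powr \<alpha>) \<le> min 1 (norm x powr \<alpha> * norm s powr \<alpha>)" by simp
  also have "\<dots> \<le> max 1 (norm x powr \<alpha>) * min 1 (norm s powr \<alpha>)"
    by (intro min_one_mult_le) auto
  finally show ?thesis using abs_one_minus_cos_le_min_powr[OF assms, of "x \<bullet> s"] by simp
qed

lemma powr_add_le:
  fixes a b \<alpha> :: real
  assumes "0 \<le> a" "0 \<le> b" "0 < \<alpha>" "\<alpha> \<le> 2"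
  shows "(a + b) powr \<alpha> \<le> 4 * (a powr \<alpha> + b powr \<alpha>)"
proof -
  have "(a + b) powr \<alpha> \<le> (2 * max a b) powr \<alpha>"
    using assms by (intro powr_mono2) auto
  also have "\<dots> = 2 powr \<alpha> * max a b powr \<alpha>" using assms by (simp add: powr_mult)
  also have "\<dots> \<le> 4 * (a powr \<alpha> + b powr \<alpha>)"
  proof (intro mult_mono)
    have "2 powr \<alpha> \<le> (2::real) powr 2" using assms by (intro powr_mono) auto
    then show "2 powr \<alpha> \<le> (4::real)" by simp
    show "max a b powr \<alpha> \<le> a powr \<alpha> + b powr \<alpha>"
      by (cases "a \<le> b") (auto simp: max_def)
  qed auto
  finally show ?thesis .
qed

lemma (in pair_sigma_finite) integrable_if_product_bound:
  fixes f :: "'a \<times> 'b \<Rightarrow> real"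
  assumes f[measurable]: "f \<in> borel_measurable (M1 \<Otimes>\<^sub>M M2)"
    and bound: "\<And>s \<omega>. \<bar>f (s, \<omega>)\<bar> \<le> B \<omega> * w s"
    and w_nonneg: "\<And>s. 0 \<le> w s" and B_nonneg: "\<And>\<omega>. 0 \<le> B \<omega>"
    and [measurable]: "w \<in> borel_measurable M1" "B \<in> borel_measurable M2"
    and w_fin: "(\<integral>\<^sup>+s. ennreal (w s) \<partial>M1) < \<infinity>" and B_int: "integrable M2 B"
  shows "integrable (M1 \<Otimes>\<^sub>M M2) f"
proof -
  have "(\<integral>\<^sup>+x. ennreal (norm (f x)) \<partial>(M1 \<Otimes>\<^sub>M M2)) = (\<integral>\<^sup>+\<omega>. \<integral>\<^sup>+s. ennreal (norm (f (s, \<omega>))) \<partial>M1 \<partial>M2)"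
    by (rule nn_integral_snd[symmetric]) measurable
  also have "\<dots> \<le> (\<integral>\<^sup>+\<omega>. \<integral>\<^sup>+s. ennreal (B \<omega>) * ennreal (w s) \<partial>M1 \<partial>M2)"
    using bound B_nonneg w_nonneg by (intro nn_integral_mono) (simp add: ennreal_mult[symmetric])
  also have "\<dots> = (\<integral>\<^sup>+\<omega>. ennreal (B \<omega>) \<partial>M2) * (\<integral>\<^sup>+s. ennreal (w s) \<partial>M1)"
    by (simp add: nn_integral_cmult nn_integral_multc)
  also have "\<dots> < \<infinity>"
    using B_int B_nonneg w_fin by (simp add: integrable_iff_bounded ennreal_mult_less_top)
  finally show ?thesis by (simp add: integrable_iff_bounded)
qed

lemma sigma_finite_density_indicator:
  fixes w :: "'a \<Rightarrow> real"
  assumes [measurable]: "w \<in> borel_measurable N" "A \<in> sets N"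
    and w_pos: "\<And>s. s \<in> A \<Longrightarrow> 0 < w s" and w_fin: "(\<integral>\<^sup>+s. ennreal (w s) \<partial>N) < \<infinity>"
  shows "sigma_finite_measure (density N (indicator A))"
proof
  define C where "C n = {s \<in> space N. inverse (real (Suc n)) < w s}" for n
  have C_sets[measurable]: "C n \<in> sets N" for n unfolding C_def by measurable
  have C_fin: "emeasure N (C n) \<noteq> \<infinity>" for n
  proof -
    have "emeasure N (C n) = (\<integral>\<^sup>+s. indicator (C n) s \<partial>N)" by simp
    also have "\<dots> \<le> (\<integral>\<^sup>+s. ennreal (real (Suc n)) * ennreal (w s) \<partial>N)"
    proof (intro nn_integral_mono)
      fix s
      show "indicator (C n) s \<le> ennreal (real (Suc n)) * ennreal (w s)"
      proof (cases "s \<in> C n")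
        case True
        then have "1 \<le> real (Suc n) * w s" by (auto simp: C_def field_simps)
        then have "1 \<le> ennreal (real (Suc n) * w s)" using ennreal_leI by fastforce
        then show ?thesis using True by (simp add: ennreal_mult')
      qed simp
    qed
    also have "\<dots> = ennreal (real (Suc n)) * (\<integral>\<^sup>+s. ennreal (w s) \<partial>N)"
      by (rule nn_integral_cmult) measurable
    also have "\<dots> < \<infinity>" using w_fin by (simp add: ennreal_mult_less_top)
    finally show ?thesis by simp
  qed
  have density_le: "emeasure (density N (indicator A)) X \<le> emeasure N X" if "X \<in> sets N" for X
  proof -
    have "emeasure (density N (indicator A)) X = (\<integral>\<^sup>+s. indicator A s * indicator X s \<partial>N)"
      using that by (intro emeasure_density) auto
    also have "\<dots> \<le> (\<integral>\<^sup>+s. indicator X s \<partial>N)"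
      by (intro nn_integral_mono) (simp add: indicator_def)
    finally show ?thesis using that by simp
  qed
  let ?cover = "insert (space N - A) (range C)"
  show "\<exists>\<C>. countable \<C> \<and> \<C> \<subseteq> sets (density N (indicator A)) \<and> \<Union>\<C> = space (density N (indicator A))
      \<and> (\<forall>X\<in>\<C>. emeasure (density N (indicator A)) X \<noteq> \<infinity>)"
  proof (intro exI[of _ ?cover] conjI ballI)
    show "\<Union>?cover = space (density N (indicator A))"
    proof -
      have "s \<in> \<Union>(range C)" if "s \<in> A" for s
        using reals_Archimedean[OF w_pos[OF that]] sets.sets_into_space[of A N] that
        by (auto simp: C_def)
      then show ?thesis by (auto simp: C_def)
    qed
    show "emeasure (density N (indicator A)) X \<noteq> \<infinity>" if "X \<in> ?cover" for X
      using that
    proof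
      assume X: "X = space N - A"
      have "emeasure (density N (indicator A)) X = (\<integral>\<^sup>+s. indicator A s * indicator X s \<partial>N)"
        using X by (intro emeasure_density) auto
      also have "\<dots> = 0" unfolding X by (simp add: indicator_inter_arith[symmetric])
      finally show ?thesis by simp
    next
      assume "X \<in> range C"
      then obtain n where "X = C n" by blast
      then show ?thesis using C_fin[of n] density_le[OF C_sets, of n] by (simp add: neq_top_trans)
    qed
  qed auto
qed

lemma integral_density_indicator:
  fixes f :: "'a \<Rightarrow> real"
  assumes "f \<in> borel_measurable N" "A \<in> sets N" and "\<And>s. s \<notin> A \<Longrightarrow> f s = 0"
  shows "integral\<^sup>L (density N (indicator A)) f = integral\<^sup>L N f"
proof -
  have "integral\<^sup>L (density N (indicator A)) f = (\<integral>s. indicator A s *\<^sub>R f s \<partial>N)"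
    using assms integral_density[of f N "indicator A"] by (simp add: ennreal_indicator)
  also have "\<dots> = integral\<^sup>L N f"
    using assms(3) by (intro Bochner_Integration.integral_cong) (auto simp: indicator_def)
  finally show ?thesis .
qed

lemma mult_max_one_powr_dist_le:
  fixes x y :: "'b::real_normed_vector" and a b \<alpha> :: real
  assumes "0 \<le> a" "0 \<le> b" "0 < \<alpha>" "\<alpha> \<le> 2"
  shows "a * b * max 1 (norm (x - y) powr \<alpha>)
    \<le> a * b + 4 * ((a * norm x powr \<alpha>) * b) + 4 * (a * (b * norm y powr \<alpha>))"
proof -
  have "norm (x - y) powr \<alpha> \<le> (norm x + norm y) powr \<alpha>"
    using assms by (intro powr_mono2 norm_triangle_ineq4) auto
  also have "\<dots> \<le> 4 * (norm x powr \<alpha> + norm y powr \<alpha>)" using assms by (intro powr_add_le) auto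
  finally have "max 1 (norm (x - y) powr \<alpha>) \<le> 1 + 4 * (norm x powr \<alpha> + norm y powr \<alpha>)" by simp
  then have "a * b * max 1 (norm (x - y) powr \<alpha>) \<le> a * b * (1 + 4 * (norm x powr \<alpha> + norm y powr \<alpha>))"
    using assms by (intro mult_left_mono) auto
  then show ?thesis by (simp add: algebra_simps)
qed

locale independent_copy = prob_space M for M :: "'w measure" +
  fixes U U' :: "'w \<Rightarrow> real" and Z Z' :: "'w \<Rightarrow> 'a::euclidean_space"
  assumes measurable_U [measurable]: "U \<in> borel_measurable M"
    and measurable_U' [measurable]: "U' \<in> borel_measurable M"
    and measurable_Z [measurable]: "Z \<in> borel_measurable M"
    and measurable_Z' [measurable]: "Z' \<in> borel_measurable M"
    and indep_copy: "indep_var borel (\<lambda>\<omega>. (U \<omega>, Z \<omega>)) borel (\<lambda>\<omega>. (U' \<omega>, Z' \<omega>))"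
    and distr_copy: "distr M borel (\<lambda>\<omega>. (U' \<omega>, Z' \<omega>)) = distr M borel (\<lambda>\<omega>. (U \<omega>, Z \<omega>))"
begin

lemma integral_copy:
  fixes g :: "real \<times> 'a \<Rightarrow> real"
  assumes [measurable]: "g \<in> borel_measurable borel"
  shows "(\<integral>\<omega>. g (U' \<omega>, Z' \<omega>) \<partial>M) = (\<integral>\<omega>. g (U \<omega>, Z \<omega>) \<partial>M)"
  using integral_distr[of "\<lambda>\<omega>. (U' \<omega>, Z' \<omega>)" M borel g]
    integral_distr[of "\<lambda>\<omega>. (U \<omega>, Z \<omega>)" M borel g] distr_copy by simp

lemma integrable_copy_iff:
  fixes g :: "real \<times> 'a \<Rightarrow> real"
  assumes [measurable]: "g \<in> borel_measurable borel"
  shows "integrable M (\<lambda>\<omega>. g (U' \<omega>, Z' \<omega>)) \<longleftrightarrow> integrable M (\<lambda>\<omega>. g (U \<omega>, Z \<omega>))"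
  using integrable_distr_eq[of "\<lambda>\<omega>. (U' \<omega>, Z' \<omega>)" M borel g]
    integrable_distr_eq[of "\<lambda>\<omega>. (U \<omega>, Z \<omega>)" M borel g] distr_copy by simp

lemma
  fixes f g :: "real \<times> 'a \<Rightarrow> real"
  assumes [measurable]: "f \<in> borel_measurable borel" "g \<in> borel_measurable borel"
    and f_int: "integrable M (\<lambda>\<omega>. f (U \<omega>, Z \<omega>))" and g_int: "integrable M (\<lambda>\<omega>. g (U \<omega>, Z \<omega>))"
  shows integrable_copy_mult: "integrable M (\<lambda>\<omega>. f (U \<omega>, Z \<omega>) * g (U' \<omega>, Z' \<omega>))"
    and integral_copy_mult: "(\<integral>\<omega>. f (U \<omega>, Z \<omega>) * g (U' \<omega>, Z' \<omega>) \<partial>M)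
      = (\<integral>\<omega>. f (U \<omega>, Z \<omega>) \<partial>M) * (\<integral>\<omega>. g (U \<omega>, Z \<omega>) \<partial>M)"
proof -
  have indep: "indep_var borel (\<lambda>\<omega>. f (U \<omega>, Z \<omega>)) borel (\<lambda>\<omega>. g (U' \<omega>, Z' \<omega>))"
    using indep_var_compose[OF indep_copy, of f borel g borel] by (simp add: comp_def)
  have g'_int: "integrable M (\<lambda>\<omega>. g (U' \<omega>, Z' \<omega>))" using g_int integrable_copy_iff by simp
  show "integrable M (\<lambda>\<omega>. f (U \<omega>, Z \<omega>) * g (U' \<omega>, Z' \<omega>))"
    using indep_var_integrable[OF indep f_int g'_int] .
  show "(\<integral>\<omega>. f (U \<omega>, Z \<omega>) * g (U' \<omega>, Z' \<omega>) \<partial>M) = (\<integral>\<omega>. f (U \<omega>, Z \<omega>) \<partial>M) * (\<integral>\<omega>. g (U \<omega>, Z \<omega>) \<partial>M)"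
    using indep_var_lebesgue_integral[OF indep f_int g'_int] integral_copy by simp
qed

lemma
  assumes "integrable M U"
  shows integrable_centered_copy_mult:
      "integrable M (\<lambda>\<omega>. (U \<omega> - expectation U) * (U' \<omega> - expectation U))"
    and integral_centered_copy_mult:
      "(\<integral>\<omega>. (U \<omega> - expectation U) * (U' \<omega> - expectation U) \<partial>M) = 0"
proof -
  have [measurable]: "(\<lambda>p::real \<times> 'a. fst p - expectation U) \<in> borel_measurable borel"
    by (intro borel_measurable_continuous_onI continuous_intros)
  have int: "integrable M (\<lambda>\<omega>. U \<omega> - expectation U)" using assms by simp
  show "integrable M (\<lambda>\<omega>. (U \<omega> - expectation U) * (U' \<omega> - expectation U))"
    using integrable_copy_mult[of "\<lambda>p. fst p - expectation U" "\<lambda>p. fst p - expectation U"] int by simp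
  show "(\<integral>\<omega>. (U \<omega> - expectation U) * (U' \<omega> - expectation U) \<partial>M) = 0"
    using integral_copy_mult[of "\<lambda>p. fst p - expectation U" "\<lambda>p. fst p - expectation U"] int assms
    by (simp add: prob_space)
qed

lemma cmod_centered_char_fun_square:
  assumes U: "integrable M U"
  shows "(cmod (\<integral>\<omega>. complex_of_real (U \<omega> - expectation U) * exp (\<i> * complex_of_real (Z \<omega> \<bullet> s)) \<partial>M))\<^sup>2
    = - (\<integral>\<omega>. (U \<omega> - expectation U) * (U' \<omega> - expectation U) * (1 - cos ((Z \<omega> - Z' \<omega>) \<bullet> s)) \<partial>M)"
proof -
  define m where "m = expectation U"
  define C where "C p = (fst p - m) * cos (snd p \<bullet> s)" for p :: "real \<times> 'a"
  define S where "S p = (fst p - m) * sin (snd p \<bullet> s)" for p :: "real \<times> 'a"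
  have [measurable]: "C \<in> borel_measurable borel" "S \<in> borel_measurable borel"
    unfolding C_def S_def by (intro borel_measurable_continuous_onI continuous_intros)+
  have U_centered: "integrable M (\<lambda>\<omega>. U \<omega> - m)" using U by simp
  have C_int: "integrable M (\<lambda>\<omega>. C (U \<omega>, Z \<omega>))" and S_int: "integrable M (\<lambda>\<omega>. S (U \<omega>, Z \<omega>))"
    by (rule Bochner_Integration.integrable_bound[OF U_centered];
        auto simp: C_def S_def abs_mult intro!: mult_left_le)+
  define \<phi> where "\<phi> = (\<integral>\<omega>. complex_of_real (U \<omega> - m) * exp (\<i> * complex_of_real (Z \<omega> \<bullet> s)) \<partial>M)"
  have \<phi>_int: "integrable M (\<lambda>\<omega>. complex_of_real (U \<omega> - m) * exp (\<i> * complex_of_real (Z \<omega> \<bullet> s)))"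
    by (rule Bochner_Integration.integrable_bound[OF U_centered]) (auto simp: norm_mult)
  have Re_\<phi>: "Re \<phi> = (\<integral>\<omega>. C (U \<omega>, Z \<omega>) \<partial>M)"
    using integral_Re[OF \<phi>_int] by (simp add: \<phi>_def C_def Re_exp)
  have Im_\<phi>: "Im \<phi> = (\<integral>\<omega>. S (U \<omega>, Z \<omega>) \<partial>M)"
    using integral_Im[OF \<phi>_int] by (simp add: \<phi>_def S_def Im_exp)
  define V where "V \<omega> = (U \<omega> - m) * (U' \<omega> - m)" for \<omega>
  have cos_diff_expand: "C (U \<omega>, Z \<omega>) * C (U' \<omega>, Z' \<omega>) + S (U \<omega>, Z \<omega>) * S (U' \<omega>, Z' \<omega>)
      = V \<omega> - V \<omega> * (1 - cos ((Z \<omega> - Z' \<omega>) \<bullet> s))" for \<omega>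
    by (simp add: C_def S_def V_def inner_diff_left cos_diff algebra_simps)
  have CC_int: "integrable M (\<lambda>\<omega>. C (U \<omega>, Z \<omega>) * C (U' \<omega>, Z' \<omega>))"
    and SS_int: "integrable M (\<lambda>\<omega>. S (U \<omega>, Z \<omega>) * S (U' \<omega>, Z' \<omega>))"
    using C_int S_int by (auto intro: integrable_copy_mult)
  have V_eq: "V = (\<lambda>\<omega>. (U \<omega> - expectation U) * (U' \<omega> - expectation U))"
    by (simp add: V_def m_def fun_eq_iff)
  have V_int: "integrable M V" and V_mean: "integral\<^sup>L M V = 0"
    unfolding V_eq using integrable_centered_copy_mult[OF U] integral_centered_copy_mult[OF U] .
  have "integrable M (\<lambda>\<omega>. V \<omega> - (C (U \<omega>, Z \<omega>) * C (U' \<omega>, Z' \<omega>) + S (U \<omega>, Z \<omega>) * S (U' \<omega>, Z' \<omega>)))"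
    using V_int CC_int SS_int by auto
  then have VK_int: "integrable M (\<lambda>\<omega>. V \<omega> * (1 - cos ((Z \<omega> - Z' \<omega>) \<bullet> s)))"
    by (simp add: cos_diff_expand)
  have "(cmod \<phi>)\<^sup>2 = (\<integral>\<omega>. C (U \<omega>, Z \<omega>) \<partial>M)\<^sup>2 + (\<integral>\<omega>. S (U \<omega>, Z \<omega>) \<partial>M)\<^sup>2"
    by (simp add: cmod_power2 Re_\<phi> Im_\<phi>)
  also have "\<dots> = (\<integral>\<omega>. C (U \<omega>, Z \<omega>) * C (U' \<omega>, Z' \<omega>) \<partial>M) + (\<integral>\<omega>. S (U \<omega>, Z \<omega>) * S (U' \<omega>, Z' \<omega>) \<partial>M)"
    using C_int S_int by (simp add: integral_copy_mult power2_eq_square)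
  also have "\<dots> = (\<integral>\<omega>. V \<omega> - V \<omega> * (1 - cos ((Z \<omega> - Z' \<omega>) \<bullet> s)) \<partial>M)"
    using CC_int SS_int by (simp add: cos_diff_expand[symmetric])
  also have "\<dots> = - (\<integral>\<omega>. V \<omega> * (1 - cos ((Z \<omega> - Z' \<omega>) \<bullet> s)) \<partial>M)"
    using V_int VK_int V_mean by simp
  finally show ?thesis by (simp add: \<phi>_def V_def m_def)
qed

lemma Tstat_eq_if_dominated:
  fixes \<nu> :: "'a measure" and w :: "'a \<Rightarrow> real" and B :: "'w \<Rightarrow> real"
  assumes U: "integrable M U" and sets_\<nu>: "sets \<nu> = sets borel"
    and [measurable]: "w \<in> borel_measurable borel" "B \<in> borel_measurable M"
    and w_nonneg: "\<And>s. 0 \<le> w s" and w_pos: "\<And>s. s \<noteq> 0 \<Longrightarrow> 0 < w s"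
    and w_fin: "(\<integral>\<^sup>+s. ennreal (w s) \<partial>\<nu>) < \<infinity>"
    and B_nonneg: "\<And>\<omega>. 0 \<le> B \<omega>" and B_int: "integrable M B"
    and bound: "\<And>s \<omega>. \<bar>(U \<omega> - expectation U) * (U' \<omega> - expectation U) * (1 - cos ((Z \<omega> - Z' \<omega>) \<bullet> s))\<bar>
      \<le> B \<omega> * w s"
  shows "Tstat M U Z \<nu> =
    - (\<integral>\<omega>. (U \<omega> - expectation U) * (U' \<omega> - expectation U) * Kfun \<nu> (Z \<omega> - Z' \<omega>) \<partial>M)"
proof -
  define h where
    "h s \<omega> = (U \<omega> - expectation U) * (U' \<omega> - expectation U) * (1 - cos ((Z \<omega> - Z' \<omega>) \<bullet> s))" for s \<omega>
  have [measurable_cong]: "sets \<nu> = sets borel" by (fact sets_\<nu>)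
  have [measurable]: "- {0::'a} \<in> sets \<nu>" by simp
  \<comment> \<open>\<open>\<nu>\<close> need not be \<open>\<sigma>\<close>-finite at the origin, where every integrand vanishes.\<close>
  define \<nu>' where "\<nu>' = density \<nu> (indicator (- {0}))"
  interpret \<nu>': sigma_finite_measure \<nu>'
    unfolding \<nu>'_def using w_pos w_fin by (intro sigma_finite_density_indicator) auto
  interpret pair_sigma_finite \<nu>' M ..
  have [measurable_cong]: "sets \<nu>' = sets borel" by (simp add: \<nu>'_def sets_\<nu>)
  have restrict: "integral\<^sup>L \<nu>' f = integral\<^sup>L \<nu> f" if "f \<in> borel_measurable borel" "f 0 = 0" for f :: "'a \<Rightarrow> real"
    unfolding \<nu>'_def using that
    by (intro integral_density_indicator) (auto simp: measurable_cong_sets[OF sets_\<nu> refl])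
  have "(\<integral>\<^sup>+s. ennreal (w s) \<partial>\<nu>') = (\<integral>\<^sup>+s. indicator (- {0}) s * ennreal (w s) \<partial>\<nu>)"
    unfolding \<nu>'_def by (intro nn_integral_density) auto
  also have "\<dots> \<le> (\<integral>\<^sup>+s. ennreal (w s) \<partial>\<nu>)"
    by (intro nn_integral_mono) (simp add: indicator_def)
  finally have w_fin': "(\<integral>\<^sup>+s. ennreal (w s) \<partial>\<nu>') < \<infinity>" using w_fin by simp
  have h_int: "integrable (\<nu>' \<Otimes>\<^sub>M M) (case_prod h)"
    using bound w_nonneg B_nonneg w_fin' B_int unfolding h_def
    by (intro integrable_if_product_bound[of _ B w]) auto
  have [measurable]: "(\<lambda>s. \<integral>\<omega>. h s \<omega> \<partial>M) \<in> borel_measurable borel"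
    unfolding h_def by measurable
  have "Tstat M U Z \<nu> = (\<integral>s. - (\<integral>\<omega>. h s \<omega> \<partial>M) \<partial>\<nu>)"
    unfolding Tstat_def h_def using cmod_centered_char_fun_square[OF U] by simp
  also have "\<dots> = - (\<integral>s. (\<integral>\<omega>. h s \<omega> \<partial>M) \<partial>\<nu>')"
    by (subst restrict) (auto simp: h_def[abs_def])
  also have "(\<integral>s. (\<integral>\<omega>. h s \<omega> \<partial>M) \<partial>\<nu>') = (\<integral>\<omega>. (\<integral>s. h s \<omega> \<partial>\<nu>') \<partial>M)"
    using Fubini_integral[OF h_int] by simp
  also have "\<dots> = (\<integral>\<omega>. (U \<omega> - expectation U) * (U' \<omega> - expectation U) * Kfun \<nu> (Z \<omega> - Z' \<omega>) \<partial>M)"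
    unfolding h_def Kfun_def by (subst restrict) auto
  finally show ?thesis .
qed

lemma integrable_centered_copy_mult_max_powr:
  assumes \<alpha>: "0 < \<alpha>" "\<alpha> \<le> 2" and U2: "integrable M (\<lambda>\<omega>. (U \<omega>)\<^sup>2)"
    and Z_int: "integrable M (\<lambda>\<omega>. norm (Z \<omega>) powr (2 * \<alpha>))"
  shows "integrable M (\<lambda>\<omega>. \<bar>(U \<omega> - expectation U) * (U' \<omega> - expectation U)\<bar> * max 1 (norm (Z \<omega> - Z' \<omega>) powr \<alpha>))"
proof -
  define m where "m = expectation U"
  define A where "A p = \<bar>fst p - m\<bar>" for p :: "real \<times> 'a"
  define F where "F p = \<bar>fst p - m\<bar> * norm (snd p) powr \<alpha>" for p :: "real \<times> 'a"
  have A_meas[measurable]: "A \<in> borel_measurable borel"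
    unfolding A_def by (intro borel_measurable_continuous_onI continuous_intros)
  have F_meas[measurable]: "F \<in> borel_measurable borel"
    unfolding F_def by (subst borel_prod[symmetric]) measurable
  have U: "integrable M U" using square_integrable_imp_integrable[OF measurable_U U2] .
  have A_int: "integrable M (\<lambda>\<omega>. A (U \<omega>, Z \<omega>))" using U by (simp add: A_def)
  have "integrable M (\<lambda>\<omega>. (U \<omega>)\<^sup>2 - 2 * m * U \<omega> + m\<^sup>2)" using U2 U by simp
  then have U2_centered: "integrable M (\<lambda>\<omega>. (U \<omega> - m)\<^sup>2)" by (simp add: power2_diff algebra_simps)
  have F_int: "integrable M (\<lambda>\<omega>. F (U \<omega>, Z \<omega>))"
  proof (rule Bochner_Integration.integrable_bound)
    show "integrable M (\<lambda>\<omega>. (U \<omega> - m)\<^sup>2 + norm (Z \<omega>) powr (2 * \<alpha>))" using U2_centered Z_int by simp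
    have "\<bar>U \<omega> - m\<bar> * norm (Z \<omega>) powr \<alpha> \<le> (U \<omega> - m)\<^sup>2 + (norm (Z \<omega>) powr \<alpha>)\<^sup>2" for \<omega>
    proof -
      have "2 * (\<bar>U \<omega> - m\<bar> * norm (Z \<omega>) powr \<alpha>) \<le> (U \<omega> - m)\<^sup>2 + (norm (Z \<omega>) powr \<alpha>)\<^sup>2"
        using sum_squares_bound[of "\<bar>U \<omega> - m\<bar>" "norm (Z \<omega>) powr \<alpha>"] by (simp add: mult.assoc)
      moreover have "0 \<le> \<bar>U \<omega> - m\<bar> * norm (Z \<omega>) powr \<alpha>" by simp
      ultimately show ?thesis by linarith
    qed
    moreover have "(norm (Z \<omega>) powr \<alpha>)\<^sup>2 = norm (Z \<omega>) powr (2 * \<alpha>)" for \<omega>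
      by (simp add: powr_powr[symmetric] powr_numeral mult.commute)
    ultimately show "AE \<omega> in M. norm (F (U \<omega>, Z \<omega>)) \<le> norm ((U \<omega> - m)\<^sup>2 + norm (Z \<omega>) powr (2 * \<alpha>))"
      by (simp add: F_def abs_mult)
  qed measurable
  define G where "G \<omega> = A (U \<omega>, Z \<omega>) * A (U' \<omega>, Z' \<omega>) + 4 * (F (U \<omega>, Z \<omega>) * A (U' \<omega>, Z' \<omega>))
    + 4 * (A (U \<omega>, Z \<omega>) * F (U' \<omega>, Z' \<omega>))" for \<omega>
  show ?thesis
  proof (rule Bochner_Integration.integrable_bound)
    show "integrable M G"
      using integrable_copy_mult[OF A_meas A_meas A_int A_int] integrable_copy_mult[OF F_meas A_meas F_int A_int]
        integrable_copy_mult[OF A_meas F_meas A_int F_int]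
      by (simp add: G_def[abs_def])
    show "AE \<omega> in M. norm (\<bar>(U \<omega> - expectation U) * (U' \<omega> - expectation U)\<bar> * max 1 (norm (Z \<omega> - Z' \<omega>) powr \<alpha>))
      \<le> norm (G \<omega>)"
      using mult_max_one_powr_dist_le[OF abs_ge_zero abs_ge_zero \<alpha>, of "U \<omega> - m" "U' \<omega> - m" "Z \<omega>" "Z' \<omega>" for \<omega>]
      by (simp add: G_def A_def F_def m_def abs_mult mult_ac)
  qed measurable
qed

lemma Tstat_eq_if_finite_measure:
  fixes \<nu> :: "'a measure"
  assumes U: "integrable M U" and sets_\<nu>: "sets \<nu> = sets borel" and "finite_measure \<nu>"
  shows "Tstat M U Z \<nu> =
    - (\<integral>\<omega>. (U \<omega> - expectation U) * (U' \<omega> - expectation U) * Kfun \<nu> (Z \<omega> - Z' \<omega>) \<partial>M)"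
proof -
  have w_fin: "(\<integral>\<^sup>+s. ennreal 1 \<partial>\<nu>) < \<infinity>"
    using assms by (simp add: finite_measure.emeasure_finite less_top[symmetric])
  have bound: "\<bar>x * (1 - cos t)\<bar> \<le> 2 * \<bar>x\<bar> * 1" for x t :: real
    using cos_le_one[of t] cos_ge_minus_one[of t] by (simp add: abs_mult mult_left_mono mult.commute)
  show ?thesis
    by (rule Tstat_eq_if_dominated[where w = "\<lambda>_. 1"
          and B = "\<lambda>\<omega>. 2 * \<bar>(U \<omega> - expectation U) * (U' \<omega> - expectation U)\<bar>"])
      (use U sets_\<nu> integrable_centered_copy_mult[OF U] w_fin bound in auto)
qed

lemma Tstat_eq_if_moment_bound:
  fixes \<nu> :: "'a measure" and \<alpha> :: real
  assumes U2: "integrable M (\<lambda>\<omega>. (U \<omega>)\<^sup>2)" and sets_\<nu>: "sets \<nu> = sets borel"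
    and \<alpha>: "0 < \<alpha>" "\<alpha> \<le> 2" and w_fin: "(\<integral>\<^sup>+ s. ennreal (min 1 (norm s powr \<alpha>)) \<partial>\<nu>) < \<infinity>"
    and Z_int: "integrable M (\<lambda>\<omega>. norm (Z \<omega>) powr (2 * \<alpha>))"
  shows "Tstat M U Z \<nu> =
    - (\<integral>\<omega>. (U \<omega> - expectation U) * (U' \<omega> - expectation U) * Kfun \<nu> (Z \<omega> - Z' \<omega>) \<partial>M)"
proof -
  have U: "integrable M U" using square_integrable_imp_integrable[OF measurable_U U2] .
  have bound: "\<bar>x * (1 - cos (z \<bullet> s))\<bar> \<le> 2 * (\<bar>x\<bar> * max 1 (norm z powr \<alpha>)) * min 1 (norm s powr \<alpha>)"
    for x :: real and z s :: 'a
    using abs_one_minus_cos_inner_le[OF \<alpha>, of z s] by (simp add: abs_mult mult_left_mono mult_ac)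
  show ?thesis
    by (rule Tstat_eq_if_dominated[where w = "\<lambda>s. min 1 (norm s powr \<alpha>)"
          and B = "\<lambda>\<omega>. 2 * (\<bar>(U \<omega> - expectation U) * (U' \<omega> - expectation U)\<bar>
                 * max 1 (norm (Z \<omega> - Z' \<omega>) powr \<alpha>))"])
      (use U sets_\<nu> w_fin bound \<alpha> integrable_centered_copy_mult_max_powr[OF \<alpha> U2 Z_int] in auto)
qed

end

theorem theorem1:
  fixes M :: "'w measure"
    and U U' :: "'w \<Rightarrow> real"
    and Z Z' :: "'w \<Rightarrow> 'a::euclidean_space"
    and \<nu> :: "'a measure"
  assumes M: "prob_space M"
    and U_meas: "U \<in> borel_measurable M" and U'_meas: "U' \<in> borel_measurable M"
    and Z_meas: "Z \<in> borel_measurable M" and Z'_meas: "Z' \<in> borel_measurable M"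
    and indep: "prob_space.indep_var M borel (\<lambda>\<omega>. (U \<omega>, Z \<omega>)) borel (\<lambda>\<omega>. (U' \<omega>, Z' \<omega>))"
    and same_dist: "distr M borel (\<lambda>\<omega>. (U' \<omega>, Z' \<omega>)) = distr M borel (\<lambda>\<omega>. (U \<omega>, Z \<omega>))"
    and sym: "symmetric_measure \<nu>"
    and U2: "integrable M (\<lambda>\<omega>. (U \<omega>)\<^sup>2)"
    and cases: "finite_measure \<nu> \<or>
      (\<exists>\<alpha>::real. 0 < \<alpha> \<and> \<alpha> \<le> 2 \<and>
         (\<integral>\<^sup>+ s. ennreal (min 1 (norm s powr \<alpha>)) \<partial>\<nu>) < \<infinity> \<and>
         integrable M (\<lambda>\<omega>. (U \<omega>)\<^sup>2) \<and>
         integrable M (\<lambda>\<omega>. norm (Z \<omega>) powr (2 * \<alpha>)))"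
  shows "Tstat M U Z \<nu> =
    - (\<integral>\<omega>. (U \<omega> - (\<integral>x. U x \<partial>M)) * (U' \<omega> - (\<integral>x. U x \<partial>M))
             * Kfun \<nu> (Z \<omega> - Z' \<omega>) \<partial>M)"
proof -
  interpret independent_copy M U U' Z Z'
    using assms by (simp add: independent_copy_def independent_copy_axioms_def)
  have sets_\<nu>: "sets \<nu> = sets borel" using sym by (simp add: symmetric_measure_def)
  have U: "integrable M U" using square_integrable_imp_integrable[OF U_meas U2] .
  from cases show ?thesis
    using Tstat_eq_if_finite_measure[OF U sets_\<nu>] Tstat_eq_if_moment_bound[OF U2 sets_\<nu>] by blast
qed

end
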